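(* Let $0<m<L$, $\alpha>0$, $\rho\ge\rho_\mathrm{GD}:=\max(1-\alpha m,\ \alpha L-1)$ and $\gamma\in[0,\rho^2]$. Let $A=I$, $B=-\alpha I$, $C=I$ (all $n\times n$). Then there exists $\varepsilon\in[0,1]$ such that the matrix \[ \begin{bmatrix} A + \big((1-\varepsilon)m+\varepsilon L\big)BC & -\varepsilon\gamma B\\ (1-\varepsilon)(L-m)C & \varepsilon\gamma I\end{bmatrix} \] is $\rho$-Schur.
   Context: A square matrix is $\rho$-Schur if all its eigenvalues lie in the open disk of radius $\rho$. *)

theory Defs
  imports "Jordan_Normal_Form.Char_Poly"
begin

definition rho_Schur :: "real \<Rightarrow> real mat \<Rightarrow> bool" where
  "rho_Schur \<rho> M \<longleftrightarrow> dim_row M = dim_col M \<and>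
     (\<forall>k. eigenvalue (map_mat complex_of_real M) k \<longrightarrow> cmod k < \<rho>)"

end

theory Submission
  imports Defs
begin

text \<open>Since A, B and C are multiples of the identity, every block is a scalar matrix, and
an eigenvalue k of a block matrix with scalar blocks a, b, c, d satisfies (k - a)(k - d) = bc.
If |1 - \<alpha>m| < \<rho>, then \<epsilon> = 0 makes the matrix block triangular with eigenvalues 1 - \<alpha>m and 0.
Otherwise \<rho> = 1 - \<alpha>m < 1, hence \<gamma> \<le> \<rho>^2 < \<rho>, and \<epsilon> = 1 gives the eigenvalues 1 - \<alpha>L and \<gamma>,
unless also \<rho> = \<alpha>L - 1. In that last case \<epsilon> = 1/2 makes the upper left block vanish, leaving
k(k - \<gamma>/2) = \<gamma>\<rho>/2, whose roots have modulus less than \<rho> because \<gamma>\<rho>/2 + \<gamma>\<rho>/2 < \<rho>^2.\<close>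

lemma eigenvalue_four_block_scalar_mat:
  fixes a b c d k :: "'a :: idom"
  assumes "eigenvalue (four_block_mat (a \<cdot>\<^sub>m 1\<^sub>m n) (b \<cdot>\<^sub>m 1\<^sub>m n) (c \<cdot>\<^sub>m 1\<^sub>m n) (d \<cdot>\<^sub>m 1\<^sub>m n)) k"
  shows "(k - a) * (k - d) = b * c"
proof -
  obtain v where v: "v \<in> carrier_vec (n + n)" "v \<noteq> 0\<^sub>v (n + n)"
    and eigen: "four_block_mat (a \<cdot>\<^sub>m 1\<^sub>m n) (b \<cdot>\<^sub>m 1\<^sub>m n) (c \<cdot>\<^sub>m 1\<^sub>m n) (d \<cdot>\<^sub>m 1\<^sub>m n) *\<^sub>v v = k \<cdot>\<^sub>v v"
    using assms unfolding eigenvalue_def eigenvector_def by auto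
  define x y where "x = vec_first v n" and "y = vec_last v n"
  have x: "x \<in> carrier_vec n" and y: "y \<in> carrier_vec n"
    unfolding x_def y_def by auto
  have v_split: "v = x @\<^sub>v y"
    using v(1) unfolding x_def y_def by simp
  have blocks: "(a \<cdot>\<^sub>m 1\<^sub>m n *\<^sub>v x + b \<cdot>\<^sub>m 1\<^sub>m n *\<^sub>v y) @\<^sub>v (c \<cdot>\<^sub>m 1\<^sub>m n *\<^sub>v x + d \<cdot>\<^sub>m 1\<^sub>m n *\<^sub>v y)
      = k \<cdot>\<^sub>v (x @\<^sub>v y)"
    using eigen unfolding v_split by (subst (asm) four_block_mat_mult_vec[OF _ _ _ _ x y]) auto
  have rows: "a * x $ i + b * y $ i = k * x $ i" "c * x $ i + d * y $ i = k * y $ i"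
    if "i < n" for i
    using arg_cong[OF blocks, of "\<lambda>w. w $ i"] arg_cong[OF blocks, of "\<lambda>w. w $ (n + i)"] that x y
    by auto
  have "\<exists>i<n. x $ i \<noteq> 0 \<or> y $ i \<noteq> 0"
  proof (rule ccontr)
    assume "\<not> ?thesis"
    then have "x = 0\<^sub>v n" "y = 0\<^sub>v n"
      using x y by (auto intro!: eq_vecI)
    with v(2) v_split show False by auto
  qed
  then obtain i where i: "i < n" "x $ i \<noteq> 0 \<or> y $ i \<noteq> 0" by blast
  have "(k - a) * x $ i = b * y $ i" "(k - d) * y $ i = c * x $ i"
    using rows[OF i(1)] by (simp_all add: algebra_simps)
  then have "((k - a) * (k - d) - b * c) * x $ i = 0" "((k - a) * (k - d) - b * c) * y $ i = 0"
    by (simp_all add: algebra_simps)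
  with i(2) show ?thesis by auto
qed

lemma rho_Schur_four_block_scalar_mat:
  fixes a b c d \<rho> :: real
  assumes "\<And>k. (k - of_real a) * (k - of_real d) = of_real (b * c) \<Longrightarrow> cmod k < \<rho>"
  shows "rho_Schur \<rho> (four_block_mat (a \<cdot>\<^sub>m 1\<^sub>m n) (b \<cdot>\<^sub>m 1\<^sub>m n) (c \<cdot>\<^sub>m 1\<^sub>m n) (d \<cdot>\<^sub>m 1\<^sub>m n))"
proof -
  have scalar: "map_mat complex_of_real (r \<cdot>\<^sub>m 1\<^sub>m n) = of_real r \<cdot>\<^sub>m 1\<^sub>m n" for r
    by (rule eq_matI) auto
  have "map_mat complex_of_real (four_block_mat (a \<cdot>\<^sub>m 1\<^sub>m n) (b \<cdot>\<^sub>m 1\<^sub>m n) (c \<cdot>\<^sub>m 1\<^sub>m n) (d \<cdot>\<^sub>m 1\<^sub>m n))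
      = four_block_mat (of_real a \<cdot>\<^sub>m 1\<^sub>m n) (of_real b \<cdot>\<^sub>m 1\<^sub>m n) (of_real c \<cdot>\<^sub>m 1\<^sub>m n) (of_real d \<cdot>\<^sub>m 1\<^sub>m n)"
    by (subst map_four_block_mat[of _ n n _ n _ n]) (auto simp: scalar)
  then show ?thesis
    using assms eigenvalue_four_block_scalar_mat unfolding rho_Schur_def by fastforce
qed

lemma rho_Schur_four_block_scalar_mat_triangular:
  fixes a b c d \<rho> :: real
  assumes "\<bar>a\<bar> < \<rho>" "\<bar>d\<bar> < \<rho>" "b * c = 0"
  shows "rho_Schur \<rho> (four_block_mat (a \<cdot>\<^sub>m 1\<^sub>m n) (b \<cdot>\<^sub>m 1\<^sub>m n) (c \<cdot>\<^sub>m 1\<^sub>m n) (d \<cdot>\<^sub>m 1\<^sub>m n))"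
proof (rule rho_Schur_four_block_scalar_mat)
  fix k :: complex
  assume "(k - of_real a) * (k - of_real d) = of_real (b * c)"
  then have "k = of_real a \<or> k = of_real d"
    using assms(3) by simp
  then show "cmod k < \<rho>"
    using assms(1,2) by auto
qed

lemma norm_quadratic_root_less:
  fixes k p q :: "'a :: real_normed_field"
  assumes root: "k * (k - p) = q" and small: "norm p * \<rho> + norm q < \<rho>\<^sup>2" and "0 \<le> \<rho>"
  shows "norm k < \<rho>"
proof (rule ccontr)
  assume "\<not> norm k < \<rho>"
  then have k_ge: "\<rho> \<le> norm k" by simp
  have "norm p * \<rho> < \<rho> * \<rho>"
    using small norm_ge_zero[of q] unfolding power2_eq_square by linarith
  then have "norm p < \<rho>"
    using \<open>0 \<le> \<rho>\<close> by (simp add: mult_less_cancel_right)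
  have "(norm k)\<^sup>2 - norm p * norm k - norm q
      = (norm k - \<rho>) * (norm k + \<rho> - norm p) + (\<rho>\<^sup>2 - norm p * \<rho> - norm q)"
    by (simp add: algebra_simps power2_eq_square)
  also have "\<dots> > 0"
    using k_ge \<open>norm p < \<rho>\<close> small norm_ge_zero[of p]
    by (intro add_nonneg_pos mult_nonneg_nonneg) linarith+
  finally have "norm p * norm k + norm q < (norm k)\<^sup>2" by simp
  moreover have "(norm k)\<^sup>2 \<le> norm p * norm k + norm q"
  proof -
    have "k * k = p * k + q"
      using root by (simp add: algebra_simps)
    then have "(norm k)\<^sup>2 = norm (p * k + q)"
      by (simp add: power2_eq_square flip: norm_mult)
    also have "\<dots> \<le> norm p * norm k + norm q"
      using norm_triangle_ineq[of "p * k" q] by (simp add: norm_mult)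
    finally show ?thesis .
  qed
  ultimately show False by simp
qed

lemma rho_Schur_four_block_scalar_mat_zero_corner:
  fixes b c d \<rho> :: real
  assumes "\<bar>d\<bar> * \<rho> + \<bar>b * c\<bar> < \<rho>\<^sup>2" "0 \<le> \<rho>"
  shows "rho_Schur \<rho> (four_block_mat (0 \<cdot>\<^sub>m 1\<^sub>m n) (b \<cdot>\<^sub>m 1\<^sub>m n) (c \<cdot>\<^sub>m 1\<^sub>m n) (d \<cdot>\<^sub>m 1\<^sub>m n))"
proof (rule rho_Schur_four_block_scalar_mat)
  fix k :: complex
  assume "(k - of_real 0) * (k - of_real d) = of_real (b * c)"
  then have root: "k * (k - of_real d) = of_real (b * c)"
    by simp
  show "cmod k < \<rho>"
    using norm_quadratic_root_less[OF root, of \<rho>] assms by (simp add: norm_mult abs_mult)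
qed

lemma exists_rho_Schur_scalar_block:
  fixes m L \<alpha> \<rho> \<gamma> :: real
  assumes "0 < m" "m < L" "0 < \<alpha>" "max (1 - \<alpha> * m) (\<alpha> * L - 1) \<le> \<rho>"
    and "0 \<le> \<gamma>" "\<gamma> \<le> \<rho>\<^sup>2"
  shows "\<exists>\<epsilon>. 0 \<le> \<epsilon> \<and> \<epsilon> \<le> 1 \<and> rho_Schur \<rho>
    (four_block_mat ((1 - ((1 - \<epsilon>) * m + \<epsilon> * L) * \<alpha>) \<cdot>\<^sub>m 1\<^sub>m n) ((\<epsilon> * \<gamma> * \<alpha>) \<cdot>\<^sub>m 1\<^sub>m n)
       (((1 - \<epsilon>) * (L - m)) \<cdot>\<^sub>m 1\<^sub>m n) ((\<epsilon> * \<gamma>) \<cdot>\<^sub>m 1\<^sub>m n))"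
proof -
  have "\<alpha> * m < \<alpha> * L"
    using assms(2,3) by simp
  then have "0 < \<rho>"
    using assms(4) by linarith
  show ?thesis
  proof (cases "\<bar>1 - \<alpha> * m\<bar> < \<rho>")
    case True
    then have "rho_Schur \<rho> (four_block_mat ((1 - m * \<alpha>) \<cdot>\<^sub>m 1\<^sub>m n) (0 \<cdot>\<^sub>m 1\<^sub>m n)
        ((L - m) \<cdot>\<^sub>m 1\<^sub>m n) (0 \<cdot>\<^sub>m 1\<^sub>m n))"
      using \<open>0 < \<rho>\<close> by (intro rho_Schur_four_block_scalar_mat_triangular) (auto simp: mult.commute)
    then show ?thesis
      by (intro exI[of _ 0]) simp
  next
    case False
    then have "\<rho> = 1 - \<alpha> * m"
      using \<open>\<alpha> * m < \<alpha> * L\<close> assms(4) by auto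
    then have "\<rho> < 1"
      using assms(1,3) by simp
    then have "\<rho>\<^sup>2 < \<rho>"
      using \<open>0 < \<rho>\<close> by (simp add: power2_eq_square)
    then have "\<gamma> < \<rho>"
      using assms(6) by linarith
    show ?thesis
    proof (cases "\<alpha> * L - 1 < \<rho>")
      case True
      then have "rho_Schur \<rho> (four_block_mat ((1 - L * \<alpha>) \<cdot>\<^sub>m 1\<^sub>m n) ((\<gamma> * \<alpha>) \<cdot>\<^sub>m 1\<^sub>m n)
          (0 \<cdot>\<^sub>m 1\<^sub>m n) (\<gamma> \<cdot>\<^sub>m 1\<^sub>m n))"
        using \<open>\<rho> = 1 - \<alpha> * m\<close> \<open>\<alpha> * m < \<alpha> * L\<close> \<open>\<gamma> < \<rho>\<close> assms(5)
        by (intro rho_Schur_four_block_scalar_mat_triangular) (auto simp: mult.commute)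
      then show ?thesis
        by (intro exI[of _ 1]) simp
    next
      case False
      then have "\<alpha> * (L - m) = 2 * \<rho>" "1 - ((1 - 1/2) * m + 1/2 * L) * \<alpha> = 0"
        using assms(4) \<open>\<rho> = 1 - \<alpha> * m\<close> by (auto simp: algebra_simps)
      have "rho_Schur \<rho> (four_block_mat (0 \<cdot>\<^sub>m 1\<^sub>m n) ((\<gamma> * \<alpha> / 2) \<cdot>\<^sub>m 1\<^sub>m n)
          (((L - m) / 2) \<cdot>\<^sub>m 1\<^sub>m n) ((\<gamma> / 2) \<cdot>\<^sub>m 1\<^sub>m n))"
      proof (rule rho_Schur_four_block_scalar_mat_zero_corner)
        have "\<bar>\<gamma> / 2\<bar> * \<rho> + \<bar>\<gamma> * \<alpha> / 2 * ((L - m) / 2)\<bar> = \<gamma> / 2 * \<rho> + \<gamma> * (\<alpha> * (L - m)) / 4"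
          using assms(2,3,5) by (simp add: abs_mult)
        also have "\<dots> = \<gamma> * \<rho>"
          using \<open>\<alpha> * (L - m) = 2 * \<rho>\<close> by simp
        also have "\<dots> < \<rho>\<^sup>2"
          using \<open>\<gamma> < \<rho>\<close> \<open>0 < \<rho>\<close> by (simp add: power2_eq_square)
        finally show "\<bar>\<gamma> / 2\<bar> * \<rho> + \<bar>\<gamma> * \<alpha> / 2 * ((L - m) / 2)\<bar> < \<rho>\<^sup>2" .
      qed (use \<open>0 < \<rho>\<close> in simp)
      then show ?thesis
        by (intro exI[of _ "1/2"]) (unfold \<open>1 - ((1 - 1/2) * m + 1/2 * L) * \<alpha> = 0\<close>, simp)
    qed
  qed
qed

theorem lemma2p10:
  fixes m L \<alpha> \<rho> \<gamma> :: real and n :: nat and A B C :: "real mat"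
  assumes "0 < m" and "m < L" and "\<alpha> > 0"
    and "\<rho> \<ge> max (1 - \<alpha> * m) (\<alpha> * L - 1)"
    and "0 \<le> \<gamma>" and "\<gamma> \<le> \<rho>\<^sup>2"
    and "A = 1\<^sub>m n" and "B = (- \<alpha>) \<cdot>\<^sub>m 1\<^sub>m n" and "C = 1\<^sub>m n"
  shows "\<exists>\<epsilon>::real. 0 \<le> \<epsilon> \<and> \<epsilon> \<le> 1 \<and>
    rho_Schur \<rho>
      (four_block_mat
        (A + ((1 - \<epsilon>) * m + \<epsilon> * L) \<cdot>\<^sub>m (B * C))
        ((- (\<epsilon> * \<gamma>)) \<cdot>\<^sub>m B)
        (((1 - \<epsilon>) * (L - m)) \<cdot>\<^sub>m C)
        ((\<epsilon> * \<gamma>) \<cdot>\<^sub>m 1\<^sub>m n))"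
proof -
  have "four_block_mat
        (A + ((1 - \<epsilon>) * m + \<epsilon> * L) \<cdot>\<^sub>m (B * C))
        ((- (\<epsilon> * \<gamma>)) \<cdot>\<^sub>m B)
        (((1 - \<epsilon>) * (L - m)) \<cdot>\<^sub>m C)
        ((\<epsilon> * \<gamma>) \<cdot>\<^sub>m 1\<^sub>m n)
      = four_block_mat ((1 - ((1 - \<epsilon>) * m + \<epsilon> * L) * \<alpha>) \<cdot>\<^sub>m 1\<^sub>m n) ((\<epsilon> * \<gamma> * \<alpha>) \<cdot>\<^sub>m 1\<^sub>m n)
          (((1 - \<epsilon>) * (L - m)) \<cdot>\<^sub>m 1\<^sub>m n) ((\<epsilon> * \<gamma>) \<cdot>\<^sub>m 1\<^sub>m n)" for \<epsilon>
    using assms(7-9) by (intro cong_four_block_mat eq_matI) (auto simp: algebra_simps)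
  then show ?thesis
    using exists_rho_Schur_scalar_block[OF assms(1-6)] by simp
qed

end
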